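(* (1) Let $K\ge 2$ and $N\ge K+1$, and let $F\in\mathcal F_K\setminus\mathcal F_K^{\mathrm{in}}$. If $Q\in\mathcal Q_K^{\mathrm{an}}$ contains a column $Q_{\star i}$ with $Q_{ki}>0$ for all $k\in\{1,\dots,K\}$, then there is $Q^2\in\mathcal Q_K^{\mathrm{an}}$ such that $FQ=FQ^2$ but $(F,Q)\not\sim(F,Q^2)$. (2) Let $K\ge 2$, let $F\in\mathcal F_K^{\mathrm{in}}$ and $Q\in\mathcal Q_K$, and suppose there are a column index $k_0$ and $0<\delta<1/2$ with $\delta\le F_{sk_0}\le 1-\delta$ for all $s\in\{1,\dots,M\}$. Then there are $Q^2\in\mathcal Q_K\setminus\mathcal Q_K^{\mathrm{an}}$ and $F^2\in\mathcal F_K^{\mathrm{in}}$ such that $FQ=F^2Q^2$ but $(F,Q)\not\sim(F^2,Q^2)$. Moreover $Q^2$ can be chosen so that $\{k: e_k \text{ is a column of } Q^2\}=\{k: e_k\text{ is a column of }Q\}\setminus\{k_0\}$.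
   Context: Fix positive integers $M$ and $N$. For a positive integer $K$, $\mathcal F_K$ is the set of real $M\times K$ matrices with all entries in $[0,1]$, and $\mathcal Q_K$ is the set of real $K\times N$ matrices with entries in $[0,1]$ each of whose columns sums to $1$. $e_k$ denotes the $k$-th standard basis vector of $\mathbb R^K$, and $A_{\star j}$ denotes the $j$-th column of a matrix $A$. $\mathcal Q_K^{\mathrm{an}}$ is the set of $Q\in\mathcal Q_K$ such that for every $k\in\{1,\dots,K\}$ there is $i$ with $Q_{\star i}=e_k$. $\mathcal F_K^{\mathrm{in}}$ is the set of $F\in\mathcal F_K$ such that $F_{\star 1}-F_{\star K},\dots,F_{\star K-1}-F_{\star K}$ are linearly independent. $(F^1,Q^1)\sim(F^2,Q^2)$ means $F^1,F^2$ have the same number $K$ of columns and there is a permutation $\pi$ of $\{1,\dots,K\}$ with $F^2_{sk}=F^1_{s\pi(k)}$ and $Q^2_{ki}=Q^1_{\pi(k)i}$ for all $s,k,i$. *)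

theory Defs
  imports Complex_Main
begin

text \<open>Matrices are functions nat => nat => real, indices 0-based: an M x K matrix
  A has entries A s k for s < M, k < K; only entries in range matter.\<close>

definition FK :: "nat \<Rightarrow> nat \<Rightarrow> (nat \<Rightarrow> nat \<Rightarrow> real) set" where
  "FK M K = {F. \<forall>s<M. \<forall>k<K. 0 \<le> F s k \<and> F s k \<le> 1}"

definition QK :: "nat \<Rightarrow> nat \<Rightarrow> (nat \<Rightarrow> nat \<Rightarrow> real) set" where
  "QK K N = {Q. (\<forall>k<K. \<forall>i<N. 0 \<le> Q k i \<and> Q k i \<le> 1) \<and>
                (\<forall>i<N. (\<Sum>k<K. Q k i) = 1)}"

definition col_is_e :: "nat \<Rightarrow> (nat \<Rightarrow> nat \<Rightarrow> real) \<Rightarrow> nat \<Rightarrow> nat \<Rightarrow> bool" where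
  "col_is_e K Q i k = (\<forall>k'<K. Q k' i = (if k' = k then 1 else 0))"

definition QK_an :: "nat \<Rightarrow> nat \<Rightarrow> (nat \<Rightarrow> nat \<Rightarrow> real) set" where
  "QK_an K N = {Q \<in> QK K N. \<forall>k<K. \<exists>i<N. col_is_e K Q i k}"

text \<open>Linear independence of the columns F_k - F_K (k = 1..K-1), i.e. here
  (0-based) F_k - F_{K-1} for k < K-1, as vectors in R^M.\<close>
definition FK_in :: "nat \<Rightarrow> nat \<Rightarrow> (nat \<Rightarrow> nat \<Rightarrow> real) set" where
  "FK_in M K = {F \<in> FK M K. \<forall>c :: nat \<Rightarrow> real.
      (\<forall>s<M. (\<Sum>k<K-1. c k * (F s k - F s (K-1))) = 0) \<longrightarrow> (\<forall>k<K-1. c k = 0)}"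

definition prod_eq :: "nat \<Rightarrow> nat \<Rightarrow> nat \<Rightarrow> (nat \<Rightarrow> nat \<Rightarrow> real) \<Rightarrow> (nat \<Rightarrow> nat \<Rightarrow> real)
    \<Rightarrow> (nat \<Rightarrow> nat \<Rightarrow> real) \<Rightarrow> (nat \<Rightarrow> nat \<Rightarrow> real) \<Rightarrow> bool" where
  "prod_eq M K N F1 Q1 F2 Q2 = (\<forall>s<M. \<forall>i<N. (\<Sum>k<K. F1 s k * Q1 k i) = (\<Sum>k<K. F2 s k * Q2 k i))"

definition perm_equiv :: "nat \<Rightarrow> nat \<Rightarrow> nat \<Rightarrow> (nat \<Rightarrow> nat \<Rightarrow> real) \<Rightarrow> (nat \<Rightarrow> nat \<Rightarrow> real)
    \<Rightarrow> (nat \<Rightarrow> nat \<Rightarrow> real) \<Rightarrow> (nat \<Rightarrow> nat \<Rightarrow> real) \<Rightarrow> bool" where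
  "perm_equiv M K N F1 Q1 F2 Q2 = (\<exists>\<pi>. bij_betw \<pi> {..<K} {..<K} \<and>
      (\<forall>s<M. \<forall>k<K. F2 s k = F1 s (\<pi> k)) \<and> (\<forall>k<K. \<forall>i<N. Q2 k i = Q1 (\<pi> k) i))"

end

theory Submission
  imports Defs
begin

text \<open>If the columns of F are affinely dependent, i.e. sum_k a_k = 0 and sum_k a_k F_k = 0
  for some nonzero a, then adding a small multiple of a to the strictly positive column
  of Q keeps Q nonnegative, leaves F Q unchanged and touches no anchor column e_k; the
  anchors force a permutation relating the two factorisations to be the identity.
  If the column F_k0 stays delta away from the boundary of the cube, then
  F Q = (F T^-1) (T Q), where T moves the fraction delta of row k0 of Q into another
  row j: this replaces F_k0 by (F_k0 - delta F_j) / (1 - delta), which still lies in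
  the cube, and leaves no column of T Q equal to e_k0.\<close>

definition affinely_independent_cols :: "nat \<Rightarrow> nat \<Rightarrow> (nat \<Rightarrow> nat \<Rightarrow> real) \<Rightarrow> bool" where
  "affinely_independent_cols M K F \<longleftrightarrow>
     (\<forall>a. (\<Sum>k<K. a k) = 0 \<and> (\<forall>s<M. (\<Sum>k<K. a k * F s k) = 0) \<longrightarrow> (\<forall>k<K. a k = 0))"

lemma sum_affine_combination:
  fixes a x :: "nat \<Rightarrow> real"
  assumes "(\<Sum>k<Suc n. a k) = 0"
  shows "(\<Sum>k<Suc n. a k * x k) = (\<Sum>k<n. a k * (x k - x n))"
proof -
  have "a n = - (\<Sum>k<n. a k)" using assms by simp
  then show ?thesis by (simp add: algebra_simps sum_subtractf sum_distrib_left sum_distrib_right)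
qed

lemma FK_in_iff_affinely_independent:
  assumes "K \<ge> 1"
  shows "F \<in> FK_in M K \<longleftrightarrow> F \<in> FK M K \<and> affinely_independent_cols M K F"
proof -
  obtain n where K: "K = Suc n" using assms by (cases K) auto
  have "(\<forall>c. (\<forall>s<M. (\<Sum>k<n. c k * (F s k - F s n)) = 0) \<longrightarrow> (\<forall>k<n. c k = 0))
        \<longleftrightarrow> affinely_independent_cols M K F"
  proof
    assume indep: "\<forall>c. (\<forall>s<M. (\<Sum>k<n. c k * (F s k - F s n)) = 0) \<longrightarrow> (\<forall>k<n. c k = 0)"
    show "affinely_independent_cols M K F"
      unfolding affinely_independent_cols_def
    proof (rule allI, rule impI)
      fix a :: "nat \<Rightarrow> real"
      assume a: "(\<Sum>k<K. a k) = 0 \<and> (\<forall>s<M. (\<Sum>k<K. a k * F s k) = 0)"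
      have "(\<Sum>k<Suc n. a k) = 0" using a unfolding K by blast
      then have "(\<Sum>k<K. a k * F s k) = (\<Sum>k<n. a k * (F s k - F s n))" for s
        unfolding K by (rule sum_affine_combination)
      then have "\<forall>s<M. (\<Sum>k<n. a k * (F s k - F s n)) = 0" using a by simp
      then have low: "\<forall>k<n. a k = 0" using indep by blast
      then have "a n = 0" using a K by simp
      then show "\<forall>k<K. a k = 0" using low K less_Suc_eq by auto
    qed
  next
    assume indep: "affinely_independent_cols M K F"
    show "\<forall>c. (\<forall>s<M. (\<Sum>k<n. c k * (F s k - F s n)) = 0) \<longrightarrow> (\<forall>k<n. c k = 0)"
    proof (rule allI, rule impI)
      fix c :: "nat \<Rightarrow> real"
      assume c: "\<forall>s<M. (\<Sum>k<n. c k * (F s k - F s n)) = 0"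
      define a where "a = c(n := - (\<Sum>k<n. c k))"
      have a_below: "(\<Sum>k<n. f (a k) k) = (\<Sum>k<n. f (c k) k)" for f :: "real \<Rightarrow> nat \<Rightarrow> real"
        by (rule sum.cong) (auto simp: a_def)
      have asum: "(\<Sum>k<Suc n. a k) = 0" using a_below[of "\<lambda>x _. x"] by (simp add: a_def)
      have "(\<Sum>k<K. a k * F s k) = (\<Sum>k<n. c k * (F s k - F s n))" for s
        unfolding K sum_affine_combination[OF asum] by (rule a_below)
      then have "\<forall>s<M. (\<Sum>k<K. a k * F s k) = 0" using c by simp
      then have "\<forall>k<K. a k = 0" using indep asum K by (simp add: affinely_independent_cols_def)
      then show "\<forall>k<n. c k = 0" using K by (metis a_def fun_upd_other less_SucI less_irrefl)
    qed
  qed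
  then show ?thesis using K by (auto simp: FK_in_def)
qed

lemma affinely_independent_cols_distinct:
  assumes "affinely_independent_cols M K F" and "a < K" "b < K" and "\<forall>s<M. F s a = F s b"
  shows "a = b"
proof (rule ccontr)
  assume "a \<noteq> b"
  define c where "c k = (if k = a then 1 else 0) - (if k = b then 1 else (0::real))" for k
  have "(\<Sum>k<K. c k) = 0" using assms(2,3) by (simp add: c_def sum_subtractf)
  moreover have "(\<Sum>k<K. c k * F s k) = F s a - F s b" for s
  proof -
    have "c k * F s k = (if k = a then F s k else 0) - (if k = b then F s k else 0)" for k
      by (simp add: c_def left_diff_distrib)
    then show ?thesis using assms(2,3) by (simp add: sum_subtractf)
  qed
  ultimately have "c a = 0" using assms by (auto simp: affinely_independent_cols_def)
  then show False using \<open>a \<noteq> b\<close> by (simp add: c_def)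
qed

lemma QK_memI:
  assumes "\<forall>k<K. \<forall>i<N. 0 \<le> Q k i" and "\<forall>i<N. (\<Sum>k<K. Q k i) = 1"
  shows "Q \<in> QK K N"
proof -
  have "Q k i \<le> 1" if "k < K" "i < N" for k i
    using member_le_sum[of k "{..<K}" "\<lambda>k. Q k i"] assms that by auto
  then show ?thesis using assms by (simp add: QK_def)
qed

lemma sum_cong_off_pair:
  fixes f g :: "'a \<Rightarrow> 'b::comm_monoid_add"
  assumes "finite A" "x \<in> A" "y \<in> A" "x \<noteq> y"
    and "\<And>z. z \<in> A \<Longrightarrow> z \<noteq> x \<Longrightarrow> z \<noteq> y \<Longrightarrow> f z = g z"
    and "f x + f y = g x + g y"
  shows "sum f A = sum g A"
proof -
  have split: "sum h A = sum h (A - {x, y}) + (h x + h y)" for h :: "'a \<Rightarrow> 'b"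
    using assms(1-4) sum.subset_diff[of "{x, y}" A h] by simp
  have "sum f (A - {x, y}) = sum g (A - {x, y})" using assms(5) by (intro sum.cong) auto
  then show ?thesis using split[of f] split[of g] assms(6) by simp
qed

lemma bij_betw_fixes_last_point:
  assumes "bij_betw \<pi> A A" "x \<in> A" "\<forall>y\<in>A - {x}. \<pi> y = y"
  shows "\<pi> x = x"
  by (metis Diff_iff assms bij_betw_iff_bijections singletonD)

lemma exists_pos_scaling_below:
  fixes g a :: "'a \<Rightarrow> real"
  assumes "finite A" and "\<forall>x\<in>A. g x > 0"
  shows "\<exists>t>0. \<forall>x\<in>A. t * \<bar>a x\<bar> \<le> g x"
proof -
  define t where "t = Min (insert 1 ((\<lambda>x. g x / (1 + \<bar>a x\<bar>)) ` A))"
  have t_pos: "t > 0" using assms by (simp add: t_def)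
  have "t * \<bar>a x\<bar> \<le> g x" if "x \<in> A" for x
  proof -
    have "t \<le> g x / (1 + \<bar>a x\<bar>)" using assms(1) that by (simp add: t_def)
    then have "t * (1 + \<bar>a x\<bar>) \<le> g x" by (simp add: pos_le_divide_eq)
    then show ?thesis using t_pos by (simp add: algebra_simps)
  qed
  then show ?thesis using t_pos by blast
qed

lemma col_is_e_not_positive:
  assumes "K \<ge> 2" and "col_is_e K Q i k"
  shows "\<not> (\<forall>k'<K. Q k' i > 0)"
proof -
  define k' where "k' = (if k = 0 then 1 else (0::nat))"
  have "k' < K" "k' \<noteq> k" using assms(1) by (auto simp: k'_def)
  then show ?thesis using assms(2) by (force simp: col_is_e_def)
qed

lemma perm_equiv_common_anchors_imp_eq:
  assumes "perm_equiv M K N F1 Q1 F2 Q2"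
    and "\<forall>k<K. \<exists>i<N. col_is_e K Q1 i k \<and> col_is_e K Q2 i k"
  shows "\<forall>k<K. \<forall>i<N. Q2 k i = Q1 k i"
proof -
  obtain \<pi> where \<pi>: "bij_betw \<pi> {..<K} {..<K}" "\<forall>k<K. \<forall>i<N. Q2 k i = Q1 (\<pi> k) i"
    using assms(1) unfolding perm_equiv_def by blast
  have "\<pi> k = k" if k: "k < K" for k
  proof -
    obtain i where i: "i < N" "col_is_e K Q1 i k" "col_is_e K Q2 i k" using assms(2) k by blast
    have "\<pi> k < K" using \<pi>(1) k by (auto simp: bij_betw_def)
    moreover have "Q1 (\<pi> k) i = 1" using \<pi>(2) i k by (simp add: col_is_e_def)
    ultimately show ?thesis using i(2) by (auto simp: col_is_e_def split: if_splits)
  qed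
  then show ?thesis using \<pi>(2) by simp
qed

definition add_to_col :: "nat \<Rightarrow> (nat \<Rightarrow> real) \<Rightarrow> (nat \<Rightarrow> nat \<Rightarrow> real) \<Rightarrow> nat \<Rightarrow> nat \<Rightarrow> real" where
  "add_to_col i0 v Q k i = (if i = i0 then Q k i + v k else Q k i)"

lemma col_is_e_add_to_col:
  "i \<noteq> i0 \<Longrightarrow> col_is_e K (add_to_col i0 v Q) i k \<longleftrightarrow> col_is_e K Q i k"
  by (simp add: col_is_e_def add_to_col_def)

lemma add_to_col_common_anchors:
  assumes "K \<ge> 2" and "Q \<in> QK_an K N" and "\<forall>k<K. Q k i0 > 0"
  shows "\<forall>k<K. \<exists>i<N. col_is_e K Q i k \<and> col_is_e K (add_to_col i0 v Q) i k"
proof (intro allI impI)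
  fix k assume "k < K"
  then obtain i where i: "i < N" "col_is_e K Q i k" using assms(2) by (auto simp: QK_an_def)
  then have "i \<noteq> i0" using col_is_e_not_positive[OF assms(1)] assms(3) by blast
  then show "\<exists>i<N. col_is_e K Q i k \<and> col_is_e K (add_to_col i0 v Q) i k"
    using i col_is_e_add_to_col by blast
qed

lemma add_to_col_QK_an:
  assumes "K \<ge> 2" and "Q \<in> QK_an K N" and "\<forall>k<K. Q k i0 > 0"
    and "\<forall>k<K. 0 \<le> Q k i0 + v k" and "(\<Sum>k<K. v k) = 0"
  shows "add_to_col i0 v Q \<in> QK_an K N"
proof -
  have Q: "\<forall>k<K. \<forall>i<N. 0 \<le> Q k i" "\<forall>i<N. (\<Sum>k<K. Q k i) = 1"
    using assms(2) by (auto simp: QK_an_def QK_def)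
  have "add_to_col i0 v Q \<in> QK K N"
  proof (rule QK_memI)
    show "\<forall>k<K. \<forall>i<N. 0 \<le> add_to_col i0 v Q k i" using Q(1) assms(4) by (simp add: add_to_col_def)
    have "(\<Sum>k<K. add_to_col i0 v Q k i) = (\<Sum>k<K. Q k i) + (if i = i0 then (\<Sum>k<K. v k) else 0)" for i
      by (simp add: add_to_col_def sum.distrib)
    then show "\<forall>i<N. (\<Sum>k<K. add_to_col i0 v Q k i) = 1" using Q(2) assms(5) by simp
  qed
  then show ?thesis using add_to_col_common_anchors[OF assms(1-3)] by (auto simp: QK_an_def)
qed

lemma prod_eq_add_to_col:
  assumes "\<forall>s<M. (\<Sum>k<K. F s k * v k) = 0"
  shows "prod_eq M K N F Q F (add_to_col i0 v Q)"
proof -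
  have "(\<Sum>k<K. F s k * add_to_col i0 v Q k i)
        = (\<Sum>k<K. F s k * Q k i) + (if i = i0 then (\<Sum>k<K. F s k * v k) else 0)" for s i
    by (simp add: add_to_col_def algebra_simps sum.distrib)
  then show ?thesis using assms by (simp add: prod_eq_def)
qed

lemma nonidentifiable_if_not_FK_in:
  assumes K2: "K \<ge> 2" and F: "F \<in> FK M K - FK_in M K" and Q: "Q \<in> QK_an K N"
    and i0: "i0 < N" and pos: "\<forall>k<K. Q k i0 > 0"
  shows "\<exists>Q2 \<in> QK_an K N. prod_eq M K N F Q F Q2 \<and> \<not> perm_equiv M K N F Q F Q2"
proof -
  obtain a k1 where a_sum: "(\<Sum>k<K. a k) = 0" and a_F: "\<forall>s<M. (\<Sum>k<K. F s k * a k) = 0"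
    and k1: "k1 < K" "a k1 \<noteq> 0"
    using F FK_in_iff_affinely_independent[of K F M] K2
    unfolding affinely_independent_cols_def by (auto simp: mult.commute)
  obtain t where t: "t > 0" "\<forall>k<K. t * \<bar>a k\<bar> \<le> Q k i0"
    using exists_pos_scaling_below[of "{..<K}" "\<lambda>k. Q k i0" a] pos by auto
  define v where "v k = t * a k" for k
  have "0 \<le> Q k i0 + v k" if "k < K" for k
  proof -
    have "- (t * \<bar>a k\<bar>) \<le> t * a k"
      using t(1) by (metis abs_ge_minus_self abs_mult abs_of_pos minus_le_iff)
    moreover have "t * \<bar>a k\<bar> \<le> Q k i0" using t(2) that by blast
    ultimately show ?thesis unfolding v_def by linarith
  qed
  moreover have "(\<Sum>k<K. v k) = 0" using a_sum by (simp add: v_def sum_distrib_left[symmetric])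
  ultimately have "add_to_col i0 v Q \<in> QK_an K N" using add_to_col_QK_an[OF K2 Q pos] by blast
  moreover have "prod_eq M K N F Q F (add_to_col i0 v Q)"
    using a_F by (intro prod_eq_add_to_col) (simp add: v_def mult.left_commute sum_distrib_left[symmetric])
  moreover have "\<not> perm_equiv M K N F Q F (add_to_col i0 v Q)"
  proof
    assume "perm_equiv M K N F Q F (add_to_col i0 v Q)"
    then have "add_to_col i0 v Q k1 i0 = Q k1 i0"
      using perm_equiv_common_anchors_imp_eq add_to_col_common_anchors[OF K2 Q pos] k1 i0 by blast
    then show False using t k1 by (simp add: add_to_col_def v_def)
  qed
  ultimately show ?thesis by blast
qed

definition extrapolate_col :: "real \<Rightarrow> nat \<Rightarrow> nat \<Rightarrow> (nat \<Rightarrow> nat \<Rightarrow> real) \<Rightarrow> nat \<Rightarrow> nat \<Rightarrow> real" where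
  "extrapolate_col \<delta> k0 j F s k = (if k = k0 then (F s k0 - \<delta> * F s j) / (1 - \<delta>) else F s k)"

definition transfer_row_mass :: "real \<Rightarrow> nat \<Rightarrow> nat \<Rightarrow> (nat \<Rightarrow> nat \<Rightarrow> real) \<Rightarrow> nat \<Rightarrow> nat \<Rightarrow> real" where
  "transfer_row_mass \<delta> k0 j Q k i =
     (if k = k0 then (1 - \<delta>) * Q k0 i else if k = j then Q j i + \<delta> * Q k0 i else Q k i)"

lemma extrapolate_col_other:
  "k \<noteq> k0 \<Longrightarrow> extrapolate_col \<delta> k0 j F s k = F s k"
  by (simp add: extrapolate_col_def)

lemma extrapolate_col_scaled:
  "\<delta> \<noteq> 1 \<Longrightarrow> (1 - \<delta>) * extrapolate_col \<delta> k0 j F s k0 = F s k0 - \<delta> * F s j"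
  by (simp add: extrapolate_col_def)

lemma extrapolate_col_FK:
  assumes "F \<in> FK M K" and "0 \<le> \<delta>" "\<delta> < 1" and "j < K"
    and "\<forall>s<M. \<delta> \<le> F s k0 \<and> F s k0 \<le> 1 - \<delta>"
  shows "extrapolate_col \<delta> k0 j F \<in> FK M K"
proof -
  have "0 \<le> (F s k0 - \<delta> * F s j) / (1 - \<delta>) \<and> (F s k0 - \<delta> * F s j) / (1 - \<delta>) \<le> 1"
    if s: "s < M" for s
  proof -
    have "0 \<le> F s j" "F s j \<le> 1" using assms(1,4) s by (auto simp: FK_def)
    then have "0 \<le> \<delta> * F s j" "\<delta> * F s j \<le> \<delta>"
      using assms(2) mult_left_le[of "F s j" \<delta>] by auto
    moreover have "\<delta> \<le> F s k0" "F s k0 \<le> 1 - \<delta>" using assms(5) s by auto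
    ultimately show ?thesis using assms(3) by (simp add: divide_simps)
  qed
  then show ?thesis using assms(1) by (simp add: FK_def extrapolate_col_def)
qed

lemma affinely_independent_cols_extrapolate_col:
  assumes "affinely_independent_cols M K F" and "k0 < K" "j < K" "j \<noteq> k0" and "\<delta> \<noteq> 1"
  shows "affinely_independent_cols M K (extrapolate_col \<delta> k0 j F)"
  unfolding affinely_independent_cols_def
proof (rule allI, rule impI)
  fix a :: "nat \<Rightarrow> real"
  assume a: "(\<Sum>k<K. a k) = 0 \<and> (\<forall>s<M. (\<Sum>k<K. a k * extrapolate_col \<delta> k0 j F s k) = 0)"
  define u where "u = a k0 / (1 - \<delta>)"
  define b where "b = a(k0 := u, j := a j - \<delta> * u)"
  have a_k0: "a k0 = (1 - \<delta>) * u" using assms(5) by (simp add: u_def)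
  have "(\<Sum>k<K. b k) = (\<Sum>k<K. a k)"
    using assms(2-4) by (intro sum_cong_off_pair) (auto simp: b_def a_k0 algebra_simps)
  moreover have "(\<Sum>k<K. b k * F s k) = (\<Sum>k<K. a k * extrapolate_col \<delta> k0 j F s k)" for s
  proof (rule sum_cong_off_pair)
    let ?E = "extrapolate_col \<delta> k0 j F s k0"
    have "a k0 * ?E = u * ((1 - \<delta>) * ?E)" by (simp add: a_k0 mult_ac)
    also have "\<dots> = u * (F s k0 - \<delta> * F s j)" by (simp only: extrapolate_col_scaled[OF assms(5)])
    finally show "b k0 * F s k0 + b j * F s j = a k0 * ?E + a j * extrapolate_col \<delta> k0 j F s j"
      using assms(4) by (simp add: b_def extrapolate_col_other algebra_simps)
  qed (use assms(2-4) in \<open>auto simp: b_def extrapolate_col_other\<close>)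
  ultimately have "(\<Sum>k<K. b k) = 0 \<and> (\<forall>s<M. (\<Sum>k<K. b k * F s k) = 0)" using a by simp
  then have "\<forall>k<K. b k = 0" using assms(1) unfolding affinely_independent_cols_def by blast
  then have "u = 0" "a j - \<delta> * u = 0" "\<forall>k<K. k \<noteq> k0 \<longrightarrow> k \<noteq> j \<longrightarrow> a k = 0"
    using assms(2-4) by (auto simp: b_def)
  then show "\<forall>k<K. a k = 0" using a_k0 by auto
qed

lemma transfer_row_mass_QK:
  assumes "Q \<in> QK K N" and "0 \<le> \<delta>" "\<delta> \<le> 1" and "k0 < K" "j < K" "j \<noteq> k0"
  shows "transfer_row_mass \<delta> k0 j Q \<in> QK K N"
proof (rule QK_memI)
  show "\<forall>k<K. \<forall>i<N. 0 \<le> transfer_row_mass \<delta> k0 j Q k i"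
    using assms by (auto simp: QK_def transfer_row_mass_def)
  have "(\<Sum>k<K. transfer_row_mass \<delta> k0 j Q k i) = (\<Sum>k<K. Q k i)" for i
    using assms(4-6) by (intro sum_cong_off_pair) (auto simp: transfer_row_mass_def algebra_simps)
  then show "\<forall>i<N. (\<Sum>k<K. transfer_row_mass \<delta> k0 j Q k i) = 1"
    using assms(1) by (simp add: QK_def)
qed

lemma col_is_e_transfer_row_mass_iff:
  assumes "Q \<in> QK K N" and "0 < \<delta>" "\<delta> < 1" and "k0 < K" "i < N"
  shows "col_is_e K (transfer_row_mass \<delta> k0 j Q) i k \<longleftrightarrow> col_is_e K Q i k \<and> k \<noteq> k0"
proof -
  let ?Q2 = "transfer_row_mass \<delta> k0 j Q"
  have same_col: "col_is_e K ?Q2 i k \<longleftrightarrow> col_is_e K Q i k" if "Q k0 i = 0"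
  proof -
    have "?Q2 k' i = Q k' i" for k' using that by (simp add: transfer_row_mass_def)
    then show ?thesis by (simp add: col_is_e_def)
  qed
  have "Q k0 i \<le> 1" using assms(1,4,5) by (simp add: QK_def)
  then have "(1 - \<delta>) * Q k0 i \<le> 1 - \<delta>" using assms(3) by (intro mult_left_le) auto
  then have "(1 - \<delta>) * Q k0 i < 1" using assms(2) by linarith
  moreover have "col_is_e K ?Q2 i k \<Longrightarrow> (1 - \<delta>) * Q k0 i = (if k0 = k then 1 else 0)"
    using assms(4) unfolding col_is_e_def by (metis transfer_row_mass_def)
  ultimately have "col_is_e K ?Q2 i k \<Longrightarrow> k \<noteq> k0 \<and> Q k0 i = 0"
    using assms(3) by (auto split: if_splits)
  moreover have "col_is_e K Q i k \<Longrightarrow> k \<noteq> k0 \<Longrightarrow> Q k0 i = 0"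
    using assms(4) by (simp add: col_is_e_def)
  ultimately show ?thesis using same_col by blast
qed

lemma prod_eq_extrapolate_col_transfer_row_mass:
  assumes "k0 < K" "j < K" "j \<noteq> k0" and "\<delta> \<noteq> 1"
  shows "prod_eq M K N F Q (extrapolate_col \<delta> k0 j F) (transfer_row_mass \<delta> k0 j Q)"
  unfolding prod_eq_def
proof (intro allI impI)
  fix s i
  let ?E = "extrapolate_col \<delta> k0 j F s k0"
  have "?E * ((1 - \<delta>) * Q k0 i) + F s j * (Q j i + \<delta> * Q k0 i)
      = ((1 - \<delta>) * ?E) * Q k0 i + F s j * (Q j i + \<delta> * Q k0 i)"
    by (simp only: mult.assoc mult.commute[of ?E])
  also have "\<dots> = (F s k0 - \<delta> * F s j) * Q k0 i + F s j * (Q j i + \<delta> * Q k0 i)"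
    by (simp only: extrapolate_col_scaled[OF assms(4)])
  also have "\<dots> = F s k0 * Q k0 i + F s j * Q j i"
    by (simp add: algebra_simps)
  finally show "(\<Sum>k<K. F s k * Q k i)
      = (\<Sum>k<K. extrapolate_col \<delta> k0 j F s k * transfer_row_mass \<delta> k0 j Q k i)"
    using assms(1-3)
    by (intro sum_cong_off_pair) (auto simp: extrapolate_col_other transfer_row_mass_def)
qed

lemma not_perm_equiv_extrapolate_col:
  assumes "affinely_independent_cols M K F" and "k0 < K" "j < K" "j \<noteq> k0"
    and "\<delta> \<noteq> 0" "\<delta> \<noteq> 1"
  shows "\<not> perm_equiv M K N F Q (extrapolate_col \<delta> k0 j F) Q2"
proof
  assume "perm_equiv M K N F Q (extrapolate_col \<delta> k0 j F) Q2"
  then obtain \<pi> where \<pi>: "bij_betw \<pi> {..<K} {..<K}"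
    "\<And>s k. s < M \<Longrightarrow> k < K \<Longrightarrow> extrapolate_col \<delta> k0 j F s k = F s (\<pi> k)"
    unfolding perm_equiv_def by blast
  have "\<pi> k = k" if k: "k \<in> {..<K} - {k0}" for k
  proof (rule affinely_independent_cols_distinct[OF assms(1)])
    show "\<pi> k < K" "k < K" using \<pi>(1) k by (auto simp: bij_betw_def)
    show "\<forall>s<M. F s (\<pi> k) = F s k" using \<pi>(2)[of _ k] k by (simp add: extrapolate_col_other)
  qed
  then have "\<pi> k0 = k0" using bij_betw_fixes_last_point[OF \<pi>(1)] assms(2) by simp
  have "F s k0 = F s j" if s: "s < M" for s
  proof -
    have "(1 - \<delta>) * F s k0 = F s k0 - \<delta> * F s j"
      using extrapolate_col_scaled[OF assms(6), of k0 j F s] \<pi>(2)[OF s assms(2)] \<open>\<pi> k0 = k0\<close>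
      by simp
    then show ?thesis using assms(5) by (auto simp: algebra_simps)
  qed
  then show False using affinely_independent_cols_distinct[OF assms(1,2,3)] assms(4) by simp
qed

lemma nonidentifiable_if_interior_col:
  assumes K2: "K \<ge> 2" and F: "F \<in> FK_in M K" and Q: "Q \<in> QK K N" and k0: "k0 < K"
    and \<delta>: "0 < \<delta>" "\<delta> < 1" and interior: "\<forall>s<M. \<delta> \<le> F s k0 \<and> F s k0 \<le> 1 - \<delta>"
  shows "\<exists>Q2 F2. Q2 \<in> QK K N - QK_an K N \<and> F2 \<in> FK_in M K \<and>
           prod_eq M K N F Q F2 Q2 \<and> \<not> perm_equiv M K N F Q F2 Q2 \<and>
           {k. k < K \<and> (\<exists>i<N. col_is_e K Q2 i k)} = {k. k < K \<and> (\<exists>i<N. col_is_e K Q i k)} - {k0}"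
proof -
  define j where "j = (if k0 = 0 then 1 else (0::nat))"
  have j: "j < K" "j \<noteq> k0" using K2 by (auto simp: j_def)
  have F': "F \<in> FK M K" "affinely_independent_cols M K F"
    using F FK_in_iff_affinely_independent[of K F M] K2 by auto
  let ?F2 = "extrapolate_col \<delta> k0 j F" and ?Q2 = "transfer_row_mass \<delta> k0 j Q"
  have anchors: "\<And>i k. i < N \<Longrightarrow> col_is_e K ?Q2 i k \<longleftrightarrow> col_is_e K Q i k \<and> k \<noteq> k0"
    using col_is_e_transfer_row_mass_iff[OF Q \<delta> k0] by blast
  have "?Q2 \<in> QK K N - QK_an K N"
    using transfer_row_mass_QK[OF Q _ _ k0 j] \<delta> anchors k0 by (auto simp: QK_an_def)
  moreover have "?F2 \<in> FK_in M K"
    using FK_in_iff_affinely_independent[of K ?F2 M] K2 \<delta> interior j F'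
      extrapolate_col_FK[OF F'(1)] affinely_independent_cols_extrapolate_col[OF F'(2) k0 j(1,2)]
    by auto
  moreover have "prod_eq M K N F Q ?F2 ?Q2"
    using prod_eq_extrapolate_col_transfer_row_mass[OF k0 j] \<delta> by simp
  moreover have "\<not> perm_equiv M K N F Q ?F2 ?Q2"
    using not_perm_equiv_extrapolate_col[OF F'(2) k0 j] \<delta> by simp
  moreover have "{k. k < K \<and> (\<exists>i<N. col_is_e K ?Q2 i k)}
      = {k. k < K \<and> (\<exists>i<N. col_is_e K Q i k)} - {k0}"
    using anchors by auto
  ultimately show ?thesis by blast
qed

theorem mainTheorem2:
  fixes M N :: nat
  assumes "M > 0" and "N > 0"
  shows
   "(\<forall>K F Q. K \<ge> 2 \<and> N \<ge> K + 1 \<and> F \<in> FK M K - FK_in M K \<and> Q \<in> QK_an K N \<and>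
        (\<exists>i<N. \<forall>k<K. Q k i > 0) \<longrightarrow>
      (\<exists>Q2 \<in> QK_an K N. prod_eq M K N F Q F Q2 \<and> \<not> perm_equiv M K N F Q F Q2))
  \<and>
   (\<forall>K F Q k0 (\<delta>::real). K \<ge> 2 \<and> F \<in> FK_in M K \<and> Q \<in> QK K N \<and> k0 < K \<and>
        0 < \<delta> \<and> \<delta> < 1/2 \<and> (\<forall>s<M. \<delta> \<le> F s k0 \<and> F s k0 \<le> 1 - \<delta>) \<longrightarrow>
      (\<exists>Q2 F2. Q2 \<in> QK K N - QK_an K N \<and> F2 \<in> FK_in M K \<and>
         prod_eq M K N F Q F2 Q2 \<and> \<not> perm_equiv M K N F Q F2 Q2 \<and>
         {k. k < K \<and> (\<exists>i<N. col_is_e K Q2 i k)} =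
           {k. k < K \<and> (\<exists>i<N. col_is_e K Q i k)} - {k0}))"
  using nonidentifiable_if_not_FK_in nonidentifiable_if_interior_col by force

end
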